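(* Let $P$ be a finite set of points in the plane in general position with $|P|$ even, and let $C$ be a connected component of the underlying graph of $P$ with vertex set $V(C)\subseteq P$. Then $|V(C)|$ is even and the underlying graph of the point set $V(C)$ is exactly $C$.
   Context: Points are in general position if no three are collinear. For a finite set $P$ of $n$ points in general position with $n$ even, a halving line of $P$ is a line through two points of $P$ that has exactly $(n-2)/2$ points of $P$ strictly on each side. The underlying graph of $P$ has vertex set $P$, and two points are adjacent if and only if the line through them is a halving line of $P$. *)

theory Defs
  imports Complex_Main
begin

text \<open>Points of the plane are pairs of reals.  orient a b c is twice the signed area
  of the triangle abc; it is positive iff c lies strictly to the left of the directed
  line from a to b, negative iff strictly to the right, zero iff a b c are collinear.\<close>

definition orient :: "real \<times> real \<Rightarrow> real \<times> real \<Rightarrow> real \<times> real \<Rightarrow> real" where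
  "orient a b c = (fst b - fst a) * (snd c - snd a) - (snd b - snd a) * (fst c - fst a)"

definition general_position :: "(real \<times> real) set \<Rightarrow> bool" where
  "general_position P \<longleftrightarrow>
     (\<forall>a\<in>P. \<forall>b\<in>P. \<forall>c\<in>P. a \<noteq> b \<and> a \<noteq> c \<and> b \<noteq> c \<longrightarrow> orient a b c \<noteq> 0)"

definition halving_line :: "(real \<times> real) set \<Rightarrow> real \<times> real \<Rightarrow> real \<times> real \<Rightarrow> bool" where
  "halving_line P a b \<longleftrightarrow> a \<in> P \<and> b \<in> P \<and> a \<noteq> b \<and>
     2 * card {c \<in> P. orient a b c > 0} + 2 = card P \<and>
     2 * card {c \<in> P. orient a b c < 0} + 2 = card P"

abbreviation underlying_adj :: "(real \<times> real) set \<Rightarrow> real \<times> real \<Rightarrow> real \<times> real \<Rightarrow> bool" where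
  "underlying_adj P \<equiv> halving_line P"

definition component_vertices :: "(real \<times> real) set \<Rightarrow> real \<times> real \<Rightarrow> (real \<times> real) set" where
  "component_vertices P p = {q. (underlying_adj P)\<^sup>*\<^sup>* p q}"

end

theory Submission
  imports Defs
begin

text \<open>Order P by the height cos t * x + sin t * y and give each point the weight 2, 1 or 0
  according as it lies in the lower half of P, belongs to a tied pair straddling the median,
  or lies in the upper half. As t varies, weights change only where a pair of points swaps
  places at the median, i.e. spans a halving line; if C is closed under halving lines, both
  points belong to C and merely exchange their weights. So the weight sum over C does not
  depend on t, and since rotating by pi turns every weight w into 2 - w, it equals card C. In
  a direction in which a and b are tied, the weights of C are read off from the sides of the
  line ab, and comparing their sum with card C shows that ab halves C iff it halves P. Finally
  card C, the weight sum in direction 0, is even unless a median pair of weight 1 each lies in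
  C, and then that pair halves C.\<close>

definition height :: "real \<Rightarrow> real \<times> real \<Rightarrow> real" where
  "height t x = cos t * fst x + sin t * snd x"

lemma orient_height_tie:
  assumes "height t x = height t y"
  shows "orient x y c = ((fst y - fst x) * sin t - (snd y - snd x) * cos t) * (height t c - height t x)"
proof -
  have "sin t ^ 2 + cos t ^ 2 = 1" by simp
  moreover from assms have "cos t * (fst y - fst x) + sin t * (snd y - snd x) = 0"
    unfolding height_def by algebra
  ultimately show ?thesis unfolding orient_def height_def by algebra
qed

lemma height_tie_slope_nonzero:
  assumes "height t x = height t y" "x \<noteq> y"
  shows "(fst y - fst x) * sin t - (snd y - snd x) * cos t \<noteq> 0"
proof
  assume k: "(fst y - fst x) * sin t - (snd y - snd x) * cos t = 0"
  have s: "sin t ^ 2 + cos t ^ 2 = 1" by simp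
  have e: "cos t * (fst y - fst x) + sin t * (snd y - snd x) = 0"
    using assms(1) unfolding height_def by algebra
  have "fst y - fst x = 0" using k e s by algebra
  moreover have "snd y - snd x = 0" using k e s by algebra
  ultimately show False using assms(2) by (simp add: prod_eq_iff)
qed

lemma general_position_height_tie:
  assumes "general_position Q" "x \<in> Q" "y \<in> Q" "z \<in> Q" "x \<noteq> y"
    and "height t x = height t y" "height t z = height t x"
  shows "z = x \<or> z = y"
proof (rule ccontr)
  assume "\<not> (z = x \<or> z = y)"
  then have "orient x y z \<noteq> 0"
    using assms(1)[unfolded general_position_def, rule_format, OF assms(2-4)] assms(5) by blast
  moreover have "orient x y z = 0" using orient_height_tie[OF assms(6), of z] assms(7) by simp
  ultimately show False by simp
qed

lemma height_tie_partition:
  assumes "general_position Q" "C \<subseteq> Q" "a \<in> C" "b \<in> C" "a \<noteq> b" "height t a = height t b"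
  shows "C = {c\<in>C. height t c < height t a} \<union> {a,b} \<union> {c\<in>C. height t c > height t a}"
proof
  show "C \<subseteq> {c\<in>C. height t c < height t a} \<union> {a,b} \<union> {c\<in>C. height t c > height t a}"
  proof
    fix z assume z: "z \<in> C"
    consider "height t z < height t a" | "height t z > height t a" | "height t z = height t a" by linarith
    then show "z \<in> {c\<in>C. height t c < height t a} \<union> {a,b} \<union> {c\<in>C. height t c > height t a}"
      using z general_position_height_tie[OF assms(1) _ _ _ assms(5,6), of z] assms(2-4)
      by cases auto
  qed
qed (use assms in auto)

lemma sum_height_tie_split:
  assumes "general_position Q" "C \<subseteq> Q" "finite C" "a \<in> C" "b \<in> C" "a \<noteq> b"
    and "height t a = height t b"
  shows "sum f C = sum f {c\<in>C. height t c < height t a} + (f a + f b) + sum f {c\<in>C. height t c > height t a}"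
proof -
  have "sum f C = sum f ({c\<in>C. height t c < height t a} \<union> {a,b} \<union> {c\<in>C. height t c > height t a})"
    using height_tie_partition[OF assms(1,2,4-7)] by simp
  also have "\<dots> = sum f ({c\<in>C. height t c < height t a} \<union> {a,b}) + sum f {c\<in>C. height t c > height t a}"
    by (rule sum.union_disjoint) (use assms in auto)
  also have "sum f ({c\<in>C. height t c < height t a} \<union> {a,b}) = sum f {c\<in>C. height t c < height t a} + sum f {a,b}"
    by (rule sum.union_disjoint) (use assms in auto)
  finally show ?thesis using assms(6) by simp
qed

text \<open>In a direction where a and b are tied, the line ab is the level line through a, so the
  two sides of ab are the points of strictly smaller and strictly larger height.\<close>

lemma halving_line_iff_height_tie:
  assumes "finite Q" "general_position Q" "a \<in> Q" "b \<in> Q" "a \<noteq> b" "height t a = height t b"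
  shows "halving_line Q a b \<longleftrightarrow> 2 * card {c\<in>Q. height t c < height t a} + 2 = card Q"
proof -
  define k where "k = (fst b - fst a) * sin t - (snd b - snd a) * cos t"
  have k0: "k \<noteq> 0" using height_tie_slope_nonzero[OF assms(6,5)] k_def by simp
  have o: "\<And>c. orient a b c = k * (height t c - height t a)" using orient_height_tie[OF assms(6)] k_def by simp
  define B where "B = {c\<in>Q. height t c < height t a}"
  define A where "A = {c\<in>Q. height t c > height t a}"
  have card_Q: "card Q = card B + card A + 2"
    using sum_height_tie_split[OF assms(2) subset_refl assms(1,3-6), of "\<lambda>_. 1::nat"]
    unfolding A_def B_def by simp
  have sides: "({c\<in>Q. orient a b c > 0} = A \<and> {c\<in>Q. orient a b c < 0} = B) \<or>
        ({c\<in>Q. orient a b c > 0} = B \<and> {c\<in>Q. orient a b c < 0} = A)"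
  proof (cases "k > 0")
    case True
    then show ?thesis unfolding o A_def B_def by (auto simp: zero_less_mult_iff mult_less_0_iff)
  next
    case False
    with k0 have "k < 0" by simp
    then show ?thesis unfolding o A_def B_def by (auto simp: zero_less_mult_iff mult_less_0_iff)
  qed
  show ?thesis unfolding halving_line_def B_def[symmetric] using sides card_Q assms by auto
qed

lemma height_tie_exists:
  assumes "a \<noteq> b"
  shows "\<exists>t. height t a = height t b"
proof -
  define d1 where "d1 = fst b - fst a"
  define d2 where "d2 = snd b - snd a"
  define r where "r = sqrt (d1^2 + d2^2)"
  have "d1 \<noteq> 0 \<or> d2 \<noteq> 0" using assms unfolding d1_def d2_def by (auto simp: prod_eq_iff)
  then have pos: "d1^2 + d2^2 > 0" by (auto simp: sum_power2_gt_zero_iff)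
  then have r0: "r > 0" unfolding r_def by simp
  have rr: "r^2 = d1^2 + d2^2" unfolding r_def using pos by simp
  have "(-d2/r)^2 + (d1/r)^2 = (d2^2 + d1^2)/r^2" by (simp add: power_divide add_divide_distrib)
  also have "\<dots> = 1" using r0 by (simp add: rr[symmetric] add.commute)
  finally obtain t where t: "-d2/r = cos t" "d1/r = sin t" using sincos_total_2pi by metis
  have "height t b - height t a = cos t * d1 + sin t * d2" unfolding height_def d1_def d2_def by algebra
  also have "\<dots> = 0" unfolding t[symmetric] using r0 by (simp add: field_simps)
  finally have "height t a = height t b" by simp
  then show ?thesis ..
qed

lemma general_position_subset:
  assumes "general_position P" "C \<subseteq> P"
  shows "general_position C"
  using assms unfolding general_position_def by blast

definition rank_lt :: "(real \<times> real) set \<Rightarrow> real \<Rightarrow> real \<times> real \<Rightarrow> nat" where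
  "rank_lt P t x = card {q\<in>P. height t q < height t x}"

definition rank_le :: "(real \<times> real) set \<Rightarrow> real \<Rightarrow> real \<times> real \<Rightarrow> nat" where
  "rank_le P t x = card {q\<in>P. height t q \<le> height t x}"

definition weight :: "(real \<times> real) set \<Rightarrow> real \<Rightarrow> real \<times> real \<Rightarrow> int" where
  "weight P t x = (if 2 * rank_le P t x \<le> card P then 1 else 0) + (if 2 * rank_lt P t x < card P then 1 else 0)"

definition refines_height_order :: "(real \<times> real) set \<Rightarrow> real \<Rightarrow> real \<Rightarrow> bool" where
  "refines_height_order P t s \<longleftrightarrow> (\<forall>p\<in>P. \<forall>q\<in>P. height t p < height t q \<longrightarrow> height s p < height s q)"

definition halving_closed :: "(real \<times> real) set \<Rightarrow> (real \<times> real) set \<Rightarrow> bool" where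
  "halving_closed P C \<longleftrightarrow> C \<subseteq> P \<and> (\<forall>x y. x \<in> C \<longrightarrow> halving_line P x y \<longrightarrow> y \<in> C)"

lemma halving_closed_subset: "halving_closed P C \<Longrightarrow> C \<subseteq> P"
  unfolding halving_closed_def by blast

lemma halving_closed_halving_line: "halving_closed P C \<Longrightarrow> x \<in> C \<Longrightarrow> halving_line P x y \<Longrightarrow> y \<in> C"
  unfolding halving_closed_def by blast

lemma halving_closed_component:
  assumes "p \<in> P"
  shows "halving_closed P (component_vertices P p)"
proof -
  have "x \<in> P" if "(halving_line P)\<^sup>*\<^sup>* p x" for x
    using that by (induction rule: rtranclp_induct) (use assms in \<open>auto simp: halving_line_def\<close>)
  then show ?thesis
    unfolding halving_closed_def component_vertices_def by (auto intro: rtranclp.rtrancl_into_rtrancl)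
qed

locale halving_setup =
  fixes P :: "(real \<times> real) set"
  assumes finite_P: "finite P" and general_position_P: "general_position P"
    and even_card_P: "even (card P)"
begin

lemma rank_le_eq: "rank_le P t x = rank_lt P t x + card {q\<in>P. height t q = height t x}"
proof -
  have "{q\<in>P. height t q \<le> height t x} = {q\<in>P. height t q < height t x} \<union> {q\<in>P. height t q = height t x}"
    by auto
  then show ?thesis unfolding rank_le_def rank_lt_def
    by (simp add: card_Un_disjoint finite_P disjoint_iff)
qed

lemma rank_le_le_rank_lt:
  assumes "height t u < height t v"
  shows "rank_le P t u \<le> rank_lt P t v"
  unfolding rank_le_def rank_lt_def using assms by (intro card_mono) (auto simp: finite_P)

lemma rank_lt_le_rank_le: "rank_lt P t x \<le> rank_le P t x"
  using rank_le_eq by simp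

lemma level_set_tie:
  assumes "x \<in> P" "y \<in> P" "y \<noteq> x" "height t y = height t x"
  shows "{q\<in>P. height t q = height t x} = {x,y}"
  using general_position_height_tie[OF general_position_P assms(1,2) _ assms(3)[symmetric] assms(4)[symmetric]]
    assms by auto

lemma level_set_cases:
  assumes "x \<in> P"
  obtains "{q\<in>P. height t q = height t x} = {x}"
    | y where "y \<in> P" "y \<noteq> x" "height t y = height t x"
proof (cases "\<exists>y\<in>P. y \<noteq> x \<and> height t y = height t x")
  case True
  then show ?thesis using that by blast
next
  case False
  then show ?thesis using assms that by auto
qed

lemma rank_le_tie:
  assumes "x \<in> P" "y \<in> P" "y \<noteq> x" "height t y = height t x"
  shows "rank_le P t x = rank_lt P t x + 2"
  using rank_le_eq[of t x] level_set_tie[OF assms] assms(3) by simp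

lemma halving_line_of_median_tie:
  assumes "x \<in> P" "y \<in> P" "y \<noteq> x" "height t y = height t x" "2 * rank_lt P t x + 2 = card P"
  shows "halving_line P x y"
  using halving_line_iff_height_tie[OF finite_P general_position_P assms(1,2) assms(3)[symmetric] assms(4)[symmetric]]
    assms(5) unfolding rank_lt_def by simp

lemma weight_bounds: "0 \<le> weight P t x" "weight P t x \<le> 2"
  unfolding weight_def by auto

lemma rank_lt_less_rank_le:
  assumes "x \<in> P"
  shows "rank_lt P t x < rank_le P t x"
proof -
  have "x \<in> {q\<in>P. height t q = height t x}" "finite {q\<in>P. height t q = height t x}"
    using assms finite_P by simp_all
  then have "card {q\<in>P. height t q = height t x} > 0" using card_gt_0_iff by blast
  then show ?thesis using rank_le_eq[of t x] by simp
qed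

lemma weight_eq_two:
  assumes "x \<in> P" "2 * rank_le P t x \<le> card P"
  shows "weight P t x = 2"
  using assms rank_lt_less_rank_le[OF assms(1), of t] unfolding weight_def by simp

lemma weight_eq_zero:
  assumes "x \<in> P" "card P \<le> 2 * rank_lt P t x"
  shows "weight P t x = 0"
  using assms rank_lt_less_rank_le[OF assms(1), of t] unfolding weight_def by simp

lemma sum_weight_eq_two:
  assumes "B \<subseteq> P" "\<And>x. x \<in> B \<Longrightarrow> 2 * rank_le P t x \<le> card P"
  shows "(\<Sum>x\<in>B. weight P t x) = 2 * int (card B)"
proof -
  have "(\<Sum>x\<in>B. weight P t x) = (\<Sum>x\<in>B. 2)"
    using assms weight_eq_two by (intro sum.cong) auto
  then show ?thesis by simp
qed

lemma sum_weight_eq_zero: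
  assumes "A \<subseteq> P" "\<And>x. x \<in> A \<Longrightarrow> card P \<le> 2 * rank_lt P t x"
  shows "(\<Sum>x\<in>A. weight P t x) = 0"
  using assms weight_eq_zero by (intro sum.neutral) auto

lemma weight_eq_one_imp_median_tie:
  assumes "x \<in> P" "weight P t x = 1"
  obtains y where "y \<in> P" "y \<noteq> x" "height t y = height t x" "2 * rank_lt P t x + 2 = card P"
proof (cases rule: level_set_cases[OF assms(1), of t])
  case 1
  have "rank_le P t x = rank_lt P t x + 1" using rank_le_eq[of t x] 1 by simp
  moreover have "2 * rank_lt P t x < card P \<longleftrightarrow> 2 * (rank_lt P t x + 1) \<le> card P"
    using even_card_P by presburger
  ultimately have "weight P t x \<noteq> 1" unfolding weight_def by simp
  then show ?thesis using assms(2) by simp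
next
  case (2 y)
  have "rank_le P t x = rank_lt P t x + 2" using rank_le_tie[OF assms(1) 2] .
  then have "2 * rank_lt P t x < card P" "card P < 2 * rank_lt P t x + 4"
    using assms(2) unfolding weight_def by (simp_all split: if_splits)
  then have "2 * rank_lt P t x + 2 = card P" using even_card_P by presburger
  then show ?thesis using 2 that by blast
qed

lemma weight_antipodal: "weight P (t + pi) x = 2 - weight P t x"
proof -
  have neg: "\<And>q. height (t + pi) q = - height t q"
    unfolding height_def by simp
  have "{q\<in>P. height (t+pi) q < height (t+pi) x} = P - {q\<in>P. height t q \<le> height t x}"
       "{q\<in>P. height (t+pi) q \<le> height (t+pi) x} = P - {q\<in>P. height t q < height t x}"
    using neg by auto
  then have "rank_lt P (t + pi) x = card P - rank_le P t x"
            "rank_le P (t + pi) x = card P - rank_lt P t x"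
    unfolding rank_lt_def rank_le_def by (simp_all add: card_Diff_subset finite_P)
  moreover have "rank_le P t x \<le> card P"
    unfolding rank_le_def by (auto intro: card_mono finite_P)
  ultimately have "2 * rank_lt P (t + pi) x < card P \<longleftrightarrow> \<not> 2 * rank_le P t x \<le> card P"
    "2 * rank_le P (t + pi) x \<le> card P \<longleftrightarrow> \<not> 2 * rank_lt P t x < card P"
    using rank_lt_le_rank_le[of t x] by simp_all arith+
  then show ?thesis unfolding weight_def by simp
qed

lemma eventually_refines_height_order: "eventually (refines_height_order P t) (nhds t)"
proof -
  have "eventually (\<lambda>s. height t p < height t q \<longrightarrow> height s p < height s q) (nhds t)" for p q
  proof (cases "height t p < height t q")
    case True
    have "((\<lambda>s. height s q - height s p) \<longlongrightarrow> height t q - height t p) (nhds t)"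
      unfolding height_def by (intro tendsto_intros filterlim_ident)
    from order_tendstoD(1)[OF this, of 0] True
    have "eventually (\<lambda>s. 0 < height s q - height s p) (nhds t)" by simp
    then show ?thesis by (rule eventually_mono) simp
  qed simp
  then show ?thesis unfolding refines_height_order_def
    by (simp add: eventually_ball_finite finite_P)
qed

lemma rank_refine:
  assumes "refines_height_order P t s" "x \<in> P"
  shows "rank_lt P s x = rank_lt P t x + card {q\<in>P. height t q = height t x \<and> height s q < height s x}"
    and "rank_le P s x = rank_lt P t x + card {q\<in>P. height t q = height t x \<and> height s q \<le> height s x}"
proof -
  have lt: "height s q < height s x \<longleftrightarrow> height t q < height t x \<or> (height t q = height t x \<and> height s q < height s x)"
   and le: "height s q \<le> height s x \<longleftrightarrow> height t q < height t x \<or> (height t q = height t x \<and> height s q \<le> height s x)"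
    if "q \<in> P" for q
    using assms that unfolding refines_height_order_def
    by (cases rule: linorder_cases[of "height t q" "height t x"]; fastforce)+
  have "{q\<in>P. height s q < height s x} =
        {q\<in>P. height t q < height t x} \<union> {q\<in>P. height t q = height t x \<and> height s q < height s x}"
   and "{q\<in>P. height s q \<le> height s x} =
        {q\<in>P. height t q < height t x} \<union> {q\<in>P. height t q = height t x \<and> height s q \<le> height s x}"
    using lt le by blast+
  note eqs = this
  show "rank_lt P s x = rank_lt P t x + card {q\<in>P. height t q = height t x \<and> height s q < height s x}"
    and "rank_le P s x = rank_lt P t x + card {q\<in>P. height t q = height t x \<and> height s q \<le> height s x}"
    unfolding rank_lt_def rank_le_def eqs by (rule card_Un_disjoint; auto simp: finite_P)+
qed

lemma rank_refine_tie:
  assumes "refines_height_order P t s" "x \<in> P" "y \<in> P" "y \<noteq> x" "height t y = height t x"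
  shows "rank_lt P s x = rank_lt P t x + (if height s y < height s x then 1 else 0)"
    and "rank_le P s x = rank_lt P t x + 1 + (if height s y \<le> height s x then 1 else 0)"
proof -
  have "{q\<in>P. height t q = height t x \<and> height s q < height s x} = (if height s y < height s x then {y} else {})"
   and "{q\<in>P. height t q = height t x \<and> height s q \<le> height s x} = (if height s y \<le> height s x then {x,y} else {x})"
    using level_set_tie[OF assms(2-5)] assms by auto
  then show "rank_lt P s x = rank_lt P t x + (if height s y < height s x then 1 else 0)"
    and "rank_le P s x = rank_lt P t x + 1 + (if height s y \<le> height s x then 1 else 0)"
    using rank_refine[OF assms(1,2)] assms(4) by simp_all
qed

lemma weight_change_imp_median_tie:
  assumes "refines_height_order P t s" "x \<in> P" "weight P s x \<noteq> weight P t x"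
  obtains y where "y \<in> P" "y \<noteq> x" "height t y = height t x" "2 * rank_lt P t x + 2 = card P"
proof (cases rule: level_set_cases[OF assms(2), of t])
  case 1
  then have "{q\<in>P. height t q = height t x \<and> height s q < height s x} = {}"
            "{q\<in>P. height t q = height t x \<and> height s q \<le> height s x} = {x}" by auto
  then have "rank_lt P s x = rank_lt P t x" "rank_le P s x = rank_le P t x"
    by (simp_all only: rank_refine[OF assms(1,2)] rank_le_eq[of t x] 1 card.empty add_0_right)
  then have "weight P s x = weight P t x" unfolding weight_def by simp
  then show ?thesis using assms(3) by simp
next
  case (2 y)
  have "2 * rank_lt P t x + 2 = card P"
  proof (rule ccontr)
    assume "2 * rank_lt P t x + 2 \<noteq> card P"
    then have "2 * rank_lt P t x + 4 \<le> card P \<or> card P \<le> 2 * rank_lt P t x"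
      using even_card_P by presburger
    then have "weight P s x = weight P t x"
      unfolding weight_def rank_refine_tie[OF assms(1,2) 2] rank_le_tie[OF assms(2) 2] by auto
    then show False using assms(3) by simp
  qed
  then show ?thesis using 2 that by blast
qed

lemma weight_sum_median_tie:
  assumes "refines_height_order P t s" "x \<in> P" "y \<in> P" "y \<noteq> x" "height t y = height t x"
    and "2 * rank_lt P t x + 2 = card P"
  shows "weight P s x + weight P s y = weight P t x + weight P t y"
proof -
  have "rank_lt P t y = rank_lt P t x" unfolding rank_lt_def using assms(5) by simp
  then show ?thesis unfolding weight_def assms(6)[symmetric]
      rank_refine_tie[OF assms(1-5)] rank_refine_tie[OF assms(1,3,2) assms(4)[symmetric] assms(5)[symmetric]]
      rank_le_tie[OF assms(2-5)] rank_le_tie[OF assms(3,2) assms(4)[symmetric] assms(5)[symmetric]]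
    by (cases rule: linorder_cases[of "height s x" "height s y"]) simp_all
qed

text \<open>Both ties would sit at the median level, which holds at most two points.\<close>

lemma median_tie_unique:
  assumes "x \<in> P" "y \<in> P" "y \<noteq> x" "height t y = height t x" "2 * rank_lt P t x + 2 = card P"
    and "z \<in> P" "z' \<in> P" "z' \<noteq> z" "height t z' = height t z" "2 * rank_lt P t z + 2 = card P"
  shows "z = x \<or> z = y"
proof -
  have "\<not> height t z < height t x" "\<not> height t x < height t z"
    using rank_le_le_rank_lt[of t z x] rank_le_le_rank_lt[of t x z] rank_le_tie[OF assms(1-4)] rank_le_tie[OF assms(6-9)] assms(5,10)
    by auto
  then show ?thesis
    using general_position_height_tie[OF general_position_P assms(1,2,6) assms(3)[symmetric] assms(4)[symmetric]]
    by auto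
qed

lemma sum_weight_locally_constant:
  assumes "halving_closed P C" "refines_height_order P t s"
  shows "(\<Sum>x\<in>C. weight P s x) = (\<Sum>x\<in>C. weight P t x)"
proof (cases "\<forall>x\<in>C. weight P s x = weight P t x")
  case True
  then show ?thesis by (intro sum.cong) auto
next
  case False
  have CP: "C \<subseteq> P" using halving_closed_subset[OF assms(1)] .
  from False obtain x where x: "x \<in> C" "weight P s x \<noteq> weight P t x" by blast
  with CP have xP: "x \<in> P" by blast
  obtain y where y: "y \<in> P" "y \<noteq> x" "height t y = height t x" and med: "2 * rank_lt P t x + 2 = card P"
    using weight_change_imp_median_tie[OF assms(2) xP x(2)] by blast
  have yC: "y \<in> C"
    using halving_closed_halving_line[OF assms(1) x(1) halving_line_of_median_tie[OF xP y med]] .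
  have rest: "weight P s z = weight P t z" if z: "z \<in> C - {x,y}" for z
  proof (rule ccontr)
    assume "weight P s z \<noteq> weight P t z"
    moreover have "z \<in> P" using z CP by blast
    ultimately obtain z' where "z' \<in> P" "z' \<noteq> z" "height t z' = height t z" "2 * rank_lt P t z + 2 = card P"
      using weight_change_imp_median_tie[OF assms(2)] by blast
    then show False using median_tie_unique[OF xP y med \<open>z \<in> P\<close>] z by auto
  qed
  have finC: "finite C" using CP finite_P finite_subset by blast
  have split: "(\<Sum>x\<in>C. f x) = f x + f y + (\<Sum>z\<in>C - {x,y}. f z)" for f :: "_ \<Rightarrow> int"
    using sum.subset_diff[of "{x,y}" C f] finC x(1) yC y(2) by (simp add: add.commute)
  have "(\<Sum>z\<in>C - {x,y}. weight P s z) = (\<Sum>z\<in>C - {x,y}. weight P t z)"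
    using rest by (rule sum.cong[OF refl])
  then show ?thesis
    unfolding split[of "weight P s"] split[of "weight P t"]
    using weight_sum_median_tie[OF assms(2) xP y med] by simp
qed

text \<open>The weight sum is a locally constant, hence constant, function of the angle, and
  rotating by pi replaces each weight w by 2 - w.\<close>

lemma sum_weight_halving_closed:
  assumes "halving_closed P C"
  shows "(\<Sum>x\<in>C. weight P t x) = int (card C)"
proof -
  define f where "f s = real_of_int (\<Sum>x\<in>C. weight P s x)" for s
  have "(f has_real_derivative 0) (at s)" for s
  proof -
    have "eventually (\<lambda>r. f r = f s) (nhds s)"
      using eventually_refines_height_order[of s]
      by (rule eventually_mono) (simp add: f_def sum_weight_locally_constant[OF assms])
    then have "(f has_real_derivative 0) (at s) \<longleftrightarrow> ((\<lambda>_. f s) has_real_derivative 0) (at s)"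
      by (intro DERIV_cong_ev) auto
    then show ?thesis by simp
  qed
  then have "f (t + pi) = f t" by (intro DERIV_isconst_all) blast
  then have "(\<Sum>x\<in>C. weight P (t + pi) x) = (\<Sum>x\<in>C. weight P t x)"
    by (simp only: f_def of_int_eq_iff)
  also have "(\<Sum>x\<in>C. weight P (t + pi) x) = (\<Sum>x\<in>C. 2 - weight P t x)"
    by (simp add: weight_antipodal)
  finally show ?thesis by (simp add: sum_subtractf)
qed

lemma halving_count_closed_iff:
  assumes "halving_closed P C" "a \<in> C" "b \<in> C" "a \<noteq> b" "height t a = height t b"
  shows "2 * rank_lt P t a + 2 = card P \<longleftrightarrow> 2 * card {c\<in>C. height t c < height t a} + 2 = card C"
proof -
  have CP: "C \<subseteq> P" using halving_closed_subset[OF assms(1)] .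
  then have aP: "a \<in> P" and bP: "b \<in> P" and finC: "finite C"
    using assms(2,3) finite_P finite_subset by auto
  define r where "r = rank_lt P t a"
  define B where "B = {c\<in>C. height t c < height t a}"
  define A where "A = {c\<in>C. height t c > height t a}"
  have ra: "rank_le P t a = r + 2"
    using rank_le_tie[OF aP bP assms(4)[symmetric] assms(5)[symmetric]] r_def by simp
  have rb: "rank_lt P t b = r" "rank_le P t b = r + 2"
    using ra unfolding r_def rank_lt_def rank_le_def assms(5) by auto
  have below: "rank_le P t x \<le> r" if "x \<in> B" for x
    using rank_le_le_rank_lt[of t x a] that unfolding B_def r_def by simp
  have above: "r + 2 \<le> rank_lt P t x" if "x \<in> A" for x
    using rank_le_le_rank_lt[of t a x] that ra unfolding A_def by simp
  have sum_C: "int (card C) = (\<Sum>x\<in>B. weight P t x) + (weight P t a + weight P t b) + (\<Sum>x\<in>A. weight P t x)"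
    using sum_height_tie_split[OF general_position_P CP finC assms(2-5), of "weight P t"]
      sum_weight_halving_closed[OF assms(1), of t]
    unfolding A_def B_def by simp
  have wb: "weight P t b = weight P t a" unfolding weight_def ra rb r_def by simp
  have sum_B: "(\<Sum>x\<in>B. weight P t x) = 2 * int (card B)" if "2 * r + 2 \<le> card P"
    using sum_weight_eq_two[of B t] below that CP unfolding B_def by fastforce
  have sum_A: "(\<Sum>x\<in>A. weight P t x) = 0" if "card P \<le> 2 * r + 2"
    using sum_weight_eq_zero[of A t] above that CP unfolding A_def by fastforce
  text \<open>If a, b straddle the median the weights of C are 2 below ab, 1 on it and 0 above, so
    card C = 2 card B + 2; otherwise a and b weigh 2 with everything below, or 0 with
    everything above.\<close>
  have "2 * r + 2 = card P \<or> 2 * r + 4 \<le> card P \<or> card P \<le> 2 * r"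
    using even_card_P by presburger
  then consider "2 * r + 2 = card P" | "2 * r + 4 \<le> card P" | "card P \<le> 2 * r" by blast
  then have "2 * r + 2 = card P \<longleftrightarrow> 2 * card B + 2 = card C"
  proof cases
    case 1
    then have "weight P t a = 1" unfolding weight_def ra r_def[symmetric] by simp
    then show ?thesis using sum_C wb sum_B sum_A 1 by simp
  next
    case 2
    then have "weight P t a = 2" using weight_eq_two[OF aP] ra by simp
    moreover have "0 \<le> (\<Sum>x\<in>A. weight P t x)" using weight_bounds by (simp add: sum_nonneg)
    ultimately show ?thesis using sum_C wb sum_B 2 by simp
  next
    case 3
    then have "weight P t a = 0" using weight_eq_zero[OF aP] r_def by simp
    moreover have "(\<Sum>x\<in>B. weight P t x) \<le> 2 * int (card B)"
      using sum_mono[of B "weight P t" "\<lambda>_. 2"] weight_bounds by simp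
    ultimately show ?thesis using sum_C wb sum_A 3 by simp
  qed
  then show ?thesis unfolding r_def B_def .
qed

lemma even_card_halving_closed:
  assumes "halving_closed P C"
  shows "even (card C)"
proof (cases "\<exists>x\<in>C. weight P 0 x = 1")
  case True
  then obtain x where x: "x \<in> C" "weight P 0 x = 1" by blast
  then have xP: "x \<in> P" using halving_closed_subset[OF assms] by blast
  obtain y where y: "y \<in> P" "y \<noteq> x" "height 0 y = height 0 x" and med: "2 * rank_lt P 0 x + 2 = card P"
    using weight_eq_one_imp_median_tie[OF xP x(2)] by blast
  have "y \<in> C"
    using halving_closed_halving_line[OF assms x(1) halving_line_of_median_tie[OF xP y med]] .
  then have "2 * card {c\<in>C. height 0 c < height 0 x} + 2 = card C"
    using halving_count_closed_iff[OF assms x(1) _ y(2)[symmetric] y(3)[symmetric]] med by blast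
  then show ?thesis by presburger
next
  case False
  then have "even (\<Sum>x\<in>C. weight P 0 x)"
    unfolding weight_def by (intro dvd_sum) (auto split: if_splits)
  then show ?thesis using sum_weight_halving_closed[OF assms] by simp
qed

lemma halving_line_halving_closed_iff:
  assumes "halving_closed P C"
  shows "halving_line C a b \<longleftrightarrow> a \<in> C \<and> b \<in> C \<and> halving_line P a b"
proof (cases "a \<in> C \<and> b \<in> C \<and> a \<noteq> b")
  case True
  then have a: "a \<in> C" and b: "b \<in> C" and ab: "a \<noteq> b" by auto
  have CP: "C \<subseteq> P" using halving_closed_subset[OF assms] .
  have "finite C" "general_position C"
    using CP finite_P general_position_P finite_subset general_position_subset by blast+
  moreover obtain t where t: "height t a = height t b" using height_tie_exists[OF ab] by blast
  ultimately show ?thesis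
    using halving_line_iff_height_tie[OF _ _ a b ab t]
      halving_line_iff_height_tie[OF finite_P general_position_P _ _ ab t]
      halving_count_closed_iff[OF assms a b ab t] CP a b
    unfolding rank_lt_def by blast
next
  case False
  then show ?thesis unfolding halving_line_def by auto
qed

end

theorem mainTheorem6:
  fixes P :: "(real \<times> real) set" and p :: "real \<times> real"
  assumes "finite P" and "general_position P" and "even (card P)"
    and "p \<in> P"
  defines "VC \<equiv> component_vertices P p"
  shows "even (card VC) \<and>
         (\<forall>a b. underlying_adj VC a b \<longleftrightarrow> (a \<in> VC \<and> b \<in> VC \<and> underlying_adj P a b))"
proof -
  interpret halving_setup P using assms(1-3) by unfold_locales
  have "halving_closed P VC" unfolding VC_def using assms(4) by (rule halving_closed_component)
  then show ?thesis using even_card_halving_closed halving_line_halving_closed_iff by blast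
qed

end
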